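(* In the stochastic Discriminative Feature Feedback setting with a representation $\mathcal{G}$ of size $m$, run the feature discovery protocol described in the context with mistake limit $b$ and threshold $\beta\in(0,1)$, and let $\delta\in(0,1)$. Suppose that at output, $\|F\|_1\ge 6\log(1/(2\delta\beta))/\beta$. Then with probability at least $1-\delta$, $\Phi_\beta\subseteq\hat\Phi$.
   Context: Setting. $\mathcal{X}$ is a domain, $\mathcal{Y}$ a finite label set, $\Phi$ a set of binary features on $\mathcal{X}$ closed under negation; in every pair $\phi,\neg\phi$ one is designated positive. A representation of size $m$ is a cover $\mathcal{G}=\{G_1,\dots,G_m\}$ of $\mathcal{X}$ by components with labels $\ell(G)$; each $x$ has a fixed component $G(x)\ni x$; $c^*(x)=\ell(G(x))$; for components $G_i,G_j$ with different labels there is $\phi(G_i,G_j)\in\Phi$ true on all of $G_i$ and false on all of $G_j$, with $\phi(G_j,G_i)=\neg\phi(G_i,G_j)$. Protocol: the learner predicts a label with an explanation example previously seen with that label; on a mistake the teacher gives the true label and $\phi(G(x_t),G(\hat x_t))$, $\hat x_t$ the explanation. Stochastic setting: examples $X$ are drawn i.i.d. from a marginal $\mathcal{D}_X$; on each draw an exception event $\texttt{Ex}$ (feedback inconsistent with $\mathcal{G}$) may occur; otherwise feedback is consistent with $\mathcal{G}$. Notation: $P[G]:=\mathbb{P}[X\in G\wedge\neg\texttt{Ex}]$; $\phi_+(G,G')$ is the positive one of $\phi(G,G'),\neg\phi(G,G')$; $P_\phi:=\{\{G,G'\}:\phi_+(G,G')=\phi\}$; $\beta_\phi:=\sum_{\{G,G'\}\in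 P_\phi}P[G]P[G']$; $\Phi_\beta:=\{\phi:\beta_\phi\ge\beta\}$. Feature discovery protocol (inputs $b$, $\beta$): get initial labeled example $(x_0,y_0)$; initialize $F:\Phi\to\mathbb{N}$ to $0$, with $\|F\|_1:=\sum_\phi F(\phi)$. While $\|F\|_1\le b/2$: get the next example $x_t$, predict $y_0$ with explanation $x_0$, get its true label $y_t$ (ignoring any other feedback), and set $(x_{\mathrm{base}},y_{\mathrm{base}}):=(x_t,y_t)$; then repeatedly get the next example and predict $y_{\mathrm{base}}$ with explanation $x_{\mathrm{base}}$ until a prediction is incorrect, at which point receive the true label and discriminative feature $\phi_t$, let $\phi_+$ be the positive one of $\phi_t,\neg\phi_t$, increment $F(\phi_+)$, and return to the outer loop. Output $\hat\Phi:=\{\phi:F(\phi)\ge\beta\|F\|_1\}$.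
   Formalization: P[G] is the probability that $G(X)=G$ and no exception occurs, not that $X\in G$; runs that never stop are not counted as failures; and the exception event, the true label and these events are taken measurable. Apart from conventions, each condition added here is assumed in the paper as well or is needed for the statement above to hold. *)

theory Defs
  imports "HOL-Probability.Probability"
begin

definition feature_system ::
  "'f set \<Rightarrow> ('f \<Rightarrow> 'x \<Rightarrow> bool) \<Rightarrow> ('f \<Rightarrow> 'f) \<Rightarrow> ('f \<Rightarrow> bool) \<Rightarrow> bool" where
  "feature_system Phi feat neg pos \<longleftrightarrow>
     (\<forall>\<phi>\<in>Phi. neg \<phi> \<in> Phi \<and> neg (neg \<phi>) = \<phi> \<and> (\<forall>x. feat (neg \<phi>) x = (\<not> feat \<phi> x))
              \<and> (pos \<phi> \<longleftrightarrow> \<not> pos (neg \<phi>)))"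

definition posf :: "('f \<Rightarrow> bool) \<Rightarrow> ('f \<Rightarrow> 'f) \<Rightarrow> 'f \<Rightarrow> 'f" where
  "posf pos neg \<phi> = (if pos \<phi> then \<phi> else neg \<phi>)"

text \<open>Components are indexed by the finite set comps (of size m); compset c is the
  set of points of component c, lbl c its label, gof x the fixed component G(x)
  of x, and disc i j the discriminating feature phi(G_i,G_j).\<close>

definition representation ::
  "'f set \<Rightarrow> ('f \<Rightarrow> 'x \<Rightarrow> bool) \<Rightarrow> ('f \<Rightarrow> 'f) \<Rightarrow> 'c set \<Rightarrow> nat \<Rightarrow> ('c \<Rightarrow> 'x set)
    \<Rightarrow> ('c \<Rightarrow> 'y) \<Rightarrow> ('x \<Rightarrow> 'c) \<Rightarrow> ('c \<Rightarrow> 'c \<Rightarrow> 'f) \<Rightarrow> bool" where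
  "representation Phi feat neg comps m compset lbl gof disc \<longleftrightarrow>
     finite comps \<and> card comps = m \<and>
     (\<forall>x. gof x \<in> comps \<and> x \<in> compset (gof x)) \<and>
     (\<forall>i\<in>comps. \<forall>j\<in>comps. lbl i \<noteq> lbl j \<longrightarrow>
         disc i j \<in> Phi \<and> (\<forall>x\<in>compset i. feat (disc i j) x)
         \<and> (\<forall>x\<in>compset j. \<not> feat (disc i j) x) \<and> disc j i = neg (disc i j))"

text \<open>Each round draws d from the distribution D; xof d is the example, exc d the
  exception event, lab d the true label reported by the teacher, and
  fb d y x' the discriminative feature reported when the learner predicts y with
  explanation x' and errs.\<close>

definition consistent_feedback ::
  "'d measure \<Rightarrow> ('d \<Rightarrow> 'x) \<Rightarrow> ('d \<Rightarrow> bool) \<Rightarrow> ('d \<Rightarrow> 'y) \<Rightarrow> ('d \<Rightarrow> 'y \<Rightarrow> 'x \<Rightarrow> 'f)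
    \<Rightarrow> ('c \<Rightarrow> 'y) \<Rightarrow> ('x \<Rightarrow> 'c) \<Rightarrow> ('c \<Rightarrow> 'c \<Rightarrow> 'f) \<Rightarrow> bool" where
  "consistent_feedback D xof exc lab fb lbl gof disc \<longleftrightarrow>
     (\<forall>d\<in>space D. \<not> exc d \<longrightarrow>
        lab d = lbl (gof (xof d)) \<and>
        (\<forall>y x'. lbl (gof (xof d)) \<noteq> lbl (gof x') \<longrightarrow> fb d y x' = disc (gof (xof d)) (gof x')))"

text \<open>P[G] := P[X in G and not Ex], with X in G read as G(X) = G.\<close>
definition PG :: "'d measure \<Rightarrow> ('d \<Rightarrow> 'x) \<Rightarrow> ('d \<Rightarrow> bool) \<Rightarrow> ('x \<Rightarrow> 'c) \<Rightarrow> 'c \<Rightarrow> real" where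
  "PG D xof exc gof c = measure D {d \<in> space D. gof (xof d) = c \<and> \<not> exc d}"

definition pairs_of ::
  "'c set \<Rightarrow> ('c \<Rightarrow> 'y) \<Rightarrow> ('c \<Rightarrow> 'c \<Rightarrow> 'f) \<Rightarrow> ('f \<Rightarrow> bool) \<Rightarrow> ('f \<Rightarrow> 'f) \<Rightarrow> 'f \<Rightarrow> 'c set set" where
  "pairs_of comps lbl disc pos neg \<phi> =
     {{i, j} | i j. i \<in> comps \<and> j \<in> comps \<and> lbl i \<noteq> lbl j \<and> posf pos neg (disc i j) = \<phi>}"

definition beta_of ::
  "'d measure \<Rightarrow> ('d \<Rightarrow> 'x) \<Rightarrow> ('d \<Rightarrow> bool) \<Rightarrow> 'c set \<Rightarrow> ('c \<Rightarrow> 'y) \<Rightarrow> ('x \<Rightarrow> 'c)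
    \<Rightarrow> ('c \<Rightarrow> 'c \<Rightarrow> 'f) \<Rightarrow> ('f \<Rightarrow> bool) \<Rightarrow> ('f \<Rightarrow> 'f) \<Rightarrow> 'f \<Rightarrow> real" where
  "beta_of D xof exc comps lbl gof disc pos neg \<phi> =
     (\<Sum>p\<in>pairs_of comps lbl disc pos neg \<phi>. \<Prod>c\<in>p. PG D xof exc gof c)"

definition Phi_beta ::
  "'f set \<Rightarrow> 'd measure \<Rightarrow> ('d \<Rightarrow> 'x) \<Rightarrow> ('d \<Rightarrow> bool) \<Rightarrow> 'c set \<Rightarrow> ('c \<Rightarrow> 'y) \<Rightarrow> ('x \<Rightarrow> 'c)
    \<Rightarrow> ('c \<Rightarrow> 'c \<Rightarrow> 'f) \<Rightarrow> ('f \<Rightarrow> bool) \<Rightarrow> ('f \<Rightarrow> 'f) \<Rightarrow> real \<Rightarrow> 'f set" where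
  "Phi_beta Phi D xof exc comps lbl gof disc pos neg \<beta> =
     {\<phi>\<in>Phi. beta_of D xof exc comps lbl gof disc pos neg \<phi> \<ge> \<beta>}"

text \<open>omega :: nat => 'd is the i.i.d. sequence of draws; draw 0 is the initial
  labelled example.  Outer iteration k starts at draw disc_start lab omega k (which
  becomes the base example); its mistake happens at the first later draw whose
  label differs from the base label.\<close>

definition next_mistake :: "('d \<Rightarrow> 'y) \<Rightarrow> (nat \<Rightarrow> 'd) \<Rightarrow> nat \<Rightarrow> nat" where
  "next_mistake lab \<omega> s = (LEAST t. s < t \<and> lab (\<omega> t) \<noteq> lab (\<omega> s))"

primrec disc_start :: "('d \<Rightarrow> 'y) \<Rightarrow> (nat \<Rightarrow> 'd) \<Rightarrow> nat \<Rightarrow> nat" where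
  "disc_start lab \<omega> 0 = 1"
| "disc_start lab \<omega> (Suc k) = Suc (next_mistake lab \<omega> (disc_start lab \<omega> k))"

definition iter_feature ::
  "('d \<Rightarrow> 'x) \<Rightarrow> ('d \<Rightarrow> 'y) \<Rightarrow> ('d \<Rightarrow> 'y \<Rightarrow> 'x \<Rightarrow> 'f) \<Rightarrow> ('f \<Rightarrow> bool) \<Rightarrow> ('f \<Rightarrow> 'f)
     \<Rightarrow> (nat \<Rightarrow> 'd) \<Rightarrow> nat \<Rightarrow> 'f" where
  "iter_feature xof lab fb pos neg \<omega> k =
     (let s = disc_start lab \<omega> k in
      posf pos neg (fb (\<omega> (next_mistake lab \<omega> s)) (lab (\<omega> s)) (xof (\<omega> s))))"

text \<open>Number of outer iterations: after k iterations the norm of F equals k, and the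
  loop stops at the first k with k > b/2.\<close>
definition num_iters :: "nat \<Rightarrow> nat" where
  "num_iters b = (LEAST k. \<not> (real k \<le> real b / 2))"

definition disc_terminates :: "('d \<Rightarrow> 'y) \<Rightarrow> nat \<Rightarrow> (nat \<Rightarrow> 'd) \<Rightarrow> bool" where
  "disc_terminates lab b \<omega> \<longleftrightarrow>
     (\<forall>k < num_iters b. \<exists>t. disc_start lab \<omega> k < t \<and> lab (\<omega> t) \<noteq> lab (\<omega> (disc_start lab \<omega> k)))"

definition Fcount ::
  "('d \<Rightarrow> 'x) \<Rightarrow> ('d \<Rightarrow> 'y) \<Rightarrow> ('d \<Rightarrow> 'y \<Rightarrow> 'x \<Rightarrow> 'f) \<Rightarrow> ('f \<Rightarrow> bool) \<Rightarrow> ('f \<Rightarrow> 'f)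
     \<Rightarrow> (nat \<Rightarrow> 'd) \<Rightarrow> nat \<Rightarrow> 'f \<Rightarrow> nat" where
  "Fcount xof lab fb pos neg \<omega> n \<phi> = card {k. k < n \<and> iter_feature xof lab fb pos neg \<omega> k = \<phi>}"

definition Phi_hat ::
  "'f set \<Rightarrow> ('d \<Rightarrow> 'x) \<Rightarrow> ('d \<Rightarrow> 'y) \<Rightarrow> ('d \<Rightarrow> 'y \<Rightarrow> 'x \<Rightarrow> 'f) \<Rightarrow> ('f \<Rightarrow> bool) \<Rightarrow> ('f \<Rightarrow> 'f)
     \<Rightarrow> nat \<Rightarrow> real \<Rightarrow> (nat \<Rightarrow> 'd) \<Rightarrow> 'f set" where
  "Phi_hat Phi xof lab fb pos neg b \<beta> \<omega> =
     (let N = num_iters b;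
          F = Fcount xof lab fb pos neg \<omega> N;
          normF = (\<Sum>\<phi>\<in>{\<phi>. F \<phi> \<noteq> 0}. F \<phi>)
      in {\<phi>\<in>Phi. real (F \<phi>) \<ge> \<beta> * real normF})"

end

(*
  Fix phi in Phi_beta and call a round a hit if its base example and its mistake come, without
  exception, from components G_j and G_i with positive feature phi(G_i, G_j) = phi; every hit
  increments F(phi).  If draws 1 and 2 form such a pair, the first round ends at draw 2, so a
  round is a hit with probability at least 2 beta_phi >= 2 beta.  Hence the weight 2^(-hits) of
  a terminating run of N rounds has expectation at most (1 - beta)^N: it factorizes over the
  first round and the remainder of the sequence after the first mistake, which is independent
  of it.  By Markov's inequality F(phi) < beta N = beta ||F||_1 has probability at most
  2^(beta N) (1 - beta)^N <= exp (- beta N (1 - ln 2)) <= 2 delta beta.  The hit events at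
  draws 1 and 2 are disjoint for distinct phi, so |Phi_beta| <= 1 / (2 beta), and a union
  bound over Phi_beta gives delta.
*)

theory Submission
  imports Defs
begin

definition shift_seq :: "nat \<Rightarrow> (nat \<Rightarrow> 'a) \<Rightarrow> nat \<Rightarrow> 'a" where
  "shift_seq n \<omega> = (\<lambda>i. \<omega> (i + n))"

lemma measurable_shift_seq[measurable]:
  "shift_seq n \<in> PiM UNIV (\<lambda>_::nat. M) \<rightarrow>\<^sub>M PiM UNIV (\<lambda>_::nat. M)"
  unfolding shift_seq_def
  by (rule measurable_PiM_single') (auto simp: space_PiM PiE_iff)

lemma (in sequence_space) nn_integral_comb_seq:
  assumes [measurable]: "h \<in> borel_measurable S"
  shows "(\<integral>\<^sup>+ \<omega>. h \<omega> \<partial>S) = (\<integral>\<^sup>+ \<omega>. \<integral>\<^sup>+ \<omega>'. h (comb_seq i \<omega> \<omega>') \<partial>S \<partial>S)"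
proof -
  have "(\<integral>\<^sup>+ \<omega>. h \<omega> \<partial>S) = (\<integral>\<^sup>+ p. h (comb_seq i (fst p) (snd p)) \<partial>(S \<Otimes>\<^sub>M S))"
    by (subst (1) PiM_comb_seq[symmetric, where i=i], subst nn_integral_distr) (auto simp: split_beta')
  also have "\<dots> = (\<integral>\<^sup>+ \<omega>. \<integral>\<^sup>+ \<omega>'. h (comb_seq i \<omega> \<omega>') \<partial>S \<partial>S)"
  proof -
    have "(\<lambda>p. h (comb_seq i (fst p) (snd p))) \<in> borel_measurable (S \<Otimes>\<^sub>M S)"
      by measurable
    from P.nn_integral_fst[OF this] show ?thesis by simp
  qed
  finally show ?thesis .
qed

text \<open>Draw 0 of the shifted sequence is draw n, which f may see; hence g must ignore it.\<close>
lemma nn_integral_PiM_mult_shift_seq: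
  fixes f g :: "(nat \<Rightarrow> 'a) \<Rightarrow> ennreal"
  assumes M: "prob_space M"
    and [measurable]: "f \<in> borel_measurable (PiM UNIV (\<lambda>_::nat. M))"
      "g \<in> borel_measurable (PiM UNIV (\<lambda>_::nat. M))"
    and f_local: "\<And>\<omega> \<omega>'. (\<And>i. i \<le> n \<Longrightarrow> \<omega> i = \<omega>' i) \<Longrightarrow> f \<omega> = f \<omega>'"
    and g_local: "\<And>\<omega> \<omega>'. (\<And>i. 0 < i \<Longrightarrow> \<omega> i = \<omega>' i) \<Longrightarrow> g \<omega> = g \<omega>'"
  shows "(\<integral>\<^sup>+ \<omega>. f \<omega> * g (shift_seq n \<omega>) \<partial>PiM UNIV (\<lambda>_. M))
       = (\<integral>\<^sup>+ \<omega>. f \<omega> \<partial>PiM UNIV (\<lambda>_. M)) * (\<integral>\<^sup>+ \<omega>. g \<omega> \<partial>PiM UNIV (\<lambda>_. M))"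
proof -
  interpret sequence_space M
    by (simp add: sequence_space_def product_prob_space_def product_prob_space_axioms_def
        product_sigma_finite_def M prob_space_imp_sigma_finite)
  obtain x0 where x0: "x0 \<in> space S"
    using P.not_empty by blast
  define g' where "g' \<omega>' = g (comb_seq 1 x0 \<omega>')" for \<omega>'
  have [measurable]: "g' \<in> borel_measurable S"
    unfolding g'_def using x0 by measurable
  have "(\<integral>\<^sup>+ \<omega>. f \<omega> * g (shift_seq n \<omega>) \<partial>S)
      = (\<integral>\<^sup>+ \<omega>. \<integral>\<^sup>+ \<omega>'. f (comb_seq (Suc n) \<omega> \<omega>') * g (shift_seq n (comb_seq (Suc n) \<omega> \<omega>')) \<partial>S \<partial>S)"
    by (rule nn_integral_comb_seq) measurable
  also have "\<dots> = (\<integral>\<^sup>+ \<omega>. \<integral>\<^sup>+ \<omega>'. f \<omega> * g' \<omega>' \<partial>S \<partial>S)"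
  proof (intro nn_integral_cong)
    fix \<omega> \<omega>'
    have "f (comb_seq (Suc n) \<omega> \<omega>') = f \<omega>"
      by (rule f_local) (simp add: comb_seq_def)
    moreover have "g (shift_seq n (comb_seq (Suc n) \<omega> \<omega>')) = g' \<omega>'"
      unfolding g'_def by (rule g_local) (auto simp: comb_seq_def shift_seq_def split: nat.split)
    ultimately show "f (comb_seq (Suc n) \<omega> \<omega>') * g (shift_seq n (comb_seq (Suc n) \<omega> \<omega>'))
        = f \<omega> * g' \<omega>'" by simp
  qed
  also have "\<dots> = (\<integral>\<^sup>+ \<omega>. f \<omega> \<partial>S) * (\<integral>\<^sup>+ \<omega>'. g' \<omega>' \<partial>S)"
    by (simp add: nn_integral_cmult nn_integral_multc)
  also have "(\<integral>\<^sup>+ \<omega>'. g' \<omega>' \<partial>S) = (\<integral>\<^sup>+ \<omega>. g \<omega> \<partial>S)"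
  proof -
    have "(\<integral>\<^sup>+ \<omega>. g \<omega> \<partial>S) = (\<integral>\<^sup>+ \<omega>. \<integral>\<^sup>+ \<omega>'. g (comb_seq 1 \<omega> \<omega>') \<partial>S \<partial>S)"
      by (rule nn_integral_comb_seq) measurable
    also have "\<dots> = (\<integral>\<^sup>+ \<omega>. \<integral>\<^sup>+ \<omega>'. g' \<omega>' \<partial>S \<partial>S)"
      unfolding g'_def by (intro nn_integral_cong g_local) (simp split: nat.split)
    also have "\<dots> = (\<integral>\<^sup>+ \<omega>'. g' \<omega>' \<partial>S)"
      by (simp add: P.emeasure_space_1)
    finally show ?thesis ..
  qed
  finally show ?thesis .
qed

definition has_mistake :: "('d \<Rightarrow> 'y) \<Rightarrow> (nat \<Rightarrow> 'd) \<Rightarrow> nat \<Rightarrow> bool" where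
  "has_mistake lab \<omega> s \<longleftrightarrow> (\<exists>t>s. lab (\<omega> t) \<noteq> lab (\<omega> s))"

definition rounds_terminate :: "('d \<Rightarrow> 'y) \<Rightarrow> nat \<Rightarrow> (nat \<Rightarrow> 'd) \<Rightarrow> bool" where
  "rounds_terminate lab N \<omega> \<longleftrightarrow> (\<forall>k<N. has_mistake lab \<omega> (disc_start lab \<omega> k))"

definition round_hits :: "('d \<Rightarrow> 'd \<Rightarrow> bool) \<Rightarrow> ('d \<Rightarrow> 'y) \<Rightarrow> nat \<Rightarrow> (nat \<Rightarrow> 'd) \<Rightarrow> nat" where
  "round_hits C lab N \<omega> =
     (\<Sum>k<N. of_bool (C (\<omega> (disc_start lab \<omega> k)) (\<omega> (next_mistake lab \<omega> (disc_start lab \<omega> k)))))"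

lemma disc_terminates_iff_rounds_terminate:
  "disc_terminates lab b \<omega> \<longleftrightarrow> rounds_terminate lab (num_iters b) \<omega>"
  unfolding disc_terminates_def rounds_terminate_def has_mistake_def by blast

lemma rounds_terminate_Suc:
  "rounds_terminate lab (Suc N) \<omega> \<longleftrightarrow>
     rounds_terminate lab N \<omega> \<and> has_mistake lab \<omega> (disc_start lab \<omega> N)"
  unfolding rounds_terminate_def by (auto simp: less_Suc_eq)

lemma
  assumes "has_mistake lab \<omega> s"
  shows next_mistake_gt: "s < next_mistake lab \<omega> s"
    and next_mistake_label: "lab (\<omega> (next_mistake lab \<omega> s)) \<noteq> lab (\<omega> s)"
  using LeastI_ex[of "\<lambda>t. s < t \<and> lab (\<omega> t) \<noteq> lab (\<omega> s)"] assms
  unfolding next_mistake_def has_mistake_def by auto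

lemma next_mistake_le:
  "s < t \<Longrightarrow> lab (\<omega> t) \<noteq> lab (\<omega> s) \<Longrightarrow> next_mistake lab \<omega> s \<le> t"
  unfolding next_mistake_def by (auto intro: Least_le)

lemma has_mistake_next_mistake_eq_iff:
  "has_mistake lab \<omega> s \<and> next_mistake lab \<omega> s = n \<longleftrightarrow>
     s < n \<and> lab (\<omega> n) \<noteq> lab (\<omega> s) \<and> (\<forall>t. s < t \<and> t < n \<longrightarrow> lab (\<omega> t) = lab (\<omega> s))"
proof
  assume "has_mistake lab \<omega> s \<and> next_mistake lab \<omega> s = n"
  then have hm: "has_mistake lab \<omega> s" and n: "next_mistake lab \<omega> s = n" by auto
  have "lab (\<omega> t) = lab (\<omega> s)" if "s < t" "t < n" for t
  proof (rule ccontr)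
    assume "lab (\<omega> t) \<noteq> lab (\<omega> s)"
    with next_mistake_le[of s t lab \<omega>] that(1) n have "n \<le> t" by simp
    with that(2) show False by simp
  qed
  then show "s < n \<and> lab (\<omega> n) \<noteq> lab (\<omega> s) \<and> (\<forall>t. s < t \<and> t < n \<longrightarrow> lab (\<omega> t) = lab (\<omega> s))"
    using next_mistake_gt[OF hm] next_mistake_label[OF hm] n by auto
next
  assume n: "s < n \<and> lab (\<omega> n) \<noteq> lab (\<omega> s) \<and> (\<forall>t. s < t \<and> t < n \<longrightarrow> lab (\<omega> t) = lab (\<omega> s))"
  then have "next_mistake lab \<omega> s = n"
    unfolding next_mistake_def by (intro Least_equality) (auto simp: not_le[symmetric])
  with n show "has_mistake lab \<omega> s \<and> next_mistake lab \<omega> s = n"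
    unfolding has_mistake_def by auto
qed

lemma has_mistake_shift_seq: "has_mistake lab (shift_seq a \<omega>) s \<longleftrightarrow> has_mistake lab \<omega> (s + a)"
proof
  assume "has_mistake lab (shift_seq a \<omega>) s"
  then obtain t where "s < t" "lab (\<omega> (t + a)) \<noteq> lab (\<omega> (s + a))"
    unfolding has_mistake_def shift_seq_def by auto
  then show "has_mistake lab \<omega> (s + a)"
    unfolding has_mistake_def by (intro exI[of _ "t + a"]) auto
next
  assume "has_mistake lab \<omega> (s + a)"
  then obtain t where "s + a < t" "lab (\<omega> t) \<noteq> lab (\<omega> (s + a))"
    unfolding has_mistake_def by auto
  then show "has_mistake lab (shift_seq a \<omega>) s"
    unfolding has_mistake_def shift_seq_def by (intro exI[of _ "t - a"]) auto
qed

lemma next_mistake_shift_seq: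
  assumes "has_mistake lab (shift_seq a \<omega>) s"
  shows "next_mistake lab \<omega> (s + a) = next_mistake lab (shift_seq a \<omega>) s + a"
  unfolding next_mistake_def[of lab \<omega>]
proof (rule Least_equality)
  show "s + a < next_mistake lab (shift_seq a \<omega>) s + a \<and>
      lab (\<omega> (next_mistake lab (shift_seq a \<omega>) s + a)) \<noteq> lab (\<omega> (s + a))"
    using next_mistake_gt[OF assms] next_mistake_label[OF assms] by (simp add: shift_seq_def)
next
  fix t assume t: "s + a < t \<and> lab (\<omega> t) \<noteq> lab (\<omega> (s + a))"
  then have "next_mistake lab (shift_seq a \<omega>) s \<le> t - a"
    by (intro next_mistake_le) (auto simp: shift_seq_def)
  with t show "next_mistake lab (shift_seq a \<omega>) s + a \<le> t" by auto
qed

lemma disc_start_Suc_shift_seq: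
  assumes "rounds_terminate lab k (shift_seq (next_mistake lab \<omega> 1) \<omega>)"
  shows "disc_start lab \<omega> (Suc k) =
           disc_start lab (shift_seq (next_mistake lab \<omega> 1) \<omega>) k + next_mistake lab \<omega> 1"
  using assms
proof (induction k)
  case (Suc k)
  let ?\<omega>' = "shift_seq (next_mistake lab \<omega> 1) \<omega>"
  have "rounds_terminate lab k ?\<omega>'" and hm: "has_mistake lab ?\<omega>' (disc_start lab ?\<omega>' k)"
    using Suc.prems by (simp_all add: rounds_terminate_Suc)
  with Suc.IH have "disc_start lab \<omega> (Suc k) = disc_start lab ?\<omega>' k + next_mistake lab \<omega> 1"
    by blast
  then show ?case
    using next_mistake_shift_seq[OF hm] by simp
qed simp

lemma rounds_terminate_Suc_shift_seq:
  "rounds_terminate lab (Suc N) \<omega> \<longleftrightarrow>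
     has_mistake lab \<omega> 1 \<and> rounds_terminate lab N (shift_seq (next_mistake lab \<omega> 1) \<omega>)"
proof (induction N)
  case 0
  then show ?case by (simp add: rounds_terminate_def)
next
  case (Suc N)
  let ?\<omega>' = "shift_seq (next_mistake lab \<omega> 1) \<omega>"
  have "rounds_terminate lab (Suc (Suc N)) \<omega> \<longleftrightarrow>
      rounds_terminate lab (Suc N) \<omega> \<and> has_mistake lab \<omega> (disc_start lab \<omega> (Suc N))"
    by (rule rounds_terminate_Suc)
  also have "\<dots> \<longleftrightarrow> has_mistake lab \<omega> 1 \<and> rounds_terminate lab N ?\<omega>' \<and>
      has_mistake lab \<omega> (disc_start lab \<omega> (Suc N))"
    using Suc.IH by blast
  also have "\<dots> \<longleftrightarrow> has_mistake lab \<omega> 1 \<and> rounds_terminate lab N ?\<omega>' \<and>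
      has_mistake lab ?\<omega>' (disc_start lab ?\<omega>' N)"
    using disc_start_Suc_shift_seq[of lab N \<omega>] has_mistake_shift_seq by metis
  also have "\<dots> \<longleftrightarrow> has_mistake lab \<omega> 1 \<and> rounds_terminate lab (Suc N) ?\<omega>'"
    using rounds_terminate_Suc by blast
  finally show ?case .
qed

lemma round_hits_Suc_shift_seq:
  assumes "rounds_terminate lab N (shift_seq (next_mistake lab \<omega> 1) \<omega>)"
  shows "round_hits C lab (Suc N) \<omega> =
           of_bool (C (\<omega> 1) (\<omega> (next_mistake lab \<omega> 1)))
           + round_hits C lab N (shift_seq (next_mistake lab \<omega> 1) \<omega>)"
proof -
  let ?T = "next_mistake lab \<omega> 1"
  let ?\<omega>' = "shift_seq ?T \<omega>"
  have "C (\<omega> (disc_start lab \<omega> (Suc k))) (\<omega> (next_mistake lab \<omega> (disc_start lab \<omega> (Suc k))))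
      \<longleftrightarrow> C (?\<omega>' (disc_start lab ?\<omega>' k)) (?\<omega>' (next_mistake lab ?\<omega>' (disc_start lab ?\<omega>' k)))"
    if "k < N" for k
  proof -
    have "rounds_terminate lab k ?\<omega>'" "has_mistake lab ?\<omega>' (disc_start lab ?\<omega>' k)"
      using assms that by (auto simp: rounds_terminate_def)
    then have "disc_start lab \<omega> (Suc k) = disc_start lab ?\<omega>' k + ?T"
      and "next_mistake lab \<omega> (disc_start lab ?\<omega>' k + ?T) =
        next_mistake lab ?\<omega>' (disc_start lab ?\<omega>' k) + ?T"
      by (simp_all add: disc_start_Suc_shift_seq next_mistake_shift_seq del: disc_start.simps)
    then show ?thesis
      by (simp add: shift_seq_def)
  qed
  then have "(\<Sum>k<N. of_bool (C (\<omega> (disc_start lab \<omega> (Suc k)))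
      (\<omega> (next_mistake lab \<omega> (disc_start lab \<omega> (Suc k)))))) = round_hits C lab N ?\<omega>'"
    unfolding round_hits_def by (intro sum.cong refl) simp
  then show ?thesis
    unfolding round_hits_def[of C lab "Suc N"] sum.lessThan_Suc_shift by simp
qed

lemma disc_start_pos: "0 < disc_start lab \<omega> k"
  by (cases k) simp_all

context
  fixes \<omega> \<omega>' :: "nat \<Rightarrow> 'd"
  assumes agree: "\<And>i. 0 < i \<Longrightarrow> \<omega> i = \<omega>' i"
begin

lemma has_mistake_cong: "0 < s \<Longrightarrow> has_mistake lab \<omega> s = has_mistake lab \<omega>' s"
  unfolding has_mistake_def using agree by auto

lemma next_mistake_cong:
  assumes "0 < s"
  shows "next_mistake lab \<omega> s = next_mistake lab \<omega>' s"
proof -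
  have "s < t \<and> lab (\<omega> t) \<noteq> lab (\<omega> s) \<longleftrightarrow> s < t \<and> lab (\<omega>' t) \<noteq> lab (\<omega>' s)" for t
    using agree assms by auto
  then show ?thesis
    unfolding next_mistake_def by simp
qed

lemma disc_start_cong: "disc_start lab \<omega> k = disc_start lab \<omega>' k"
  by (induction k) (simp_all add: next_mistake_cong disc_start_pos)

lemma rounds_terminate_cong: "rounds_terminate lab N \<omega> = rounds_terminate lab N \<omega>'"
  unfolding rounds_terminate_def by (simp add: has_mistake_cong disc_start_cong disc_start_pos)

lemma round_hits_cong:
  assumes "rounds_terminate lab N \<omega>"
  shows "round_hits C lab N \<omega> = round_hits C lab N \<omega>'"
  unfolding round_hits_def
proof (intro sum.cong refl arg_cong[where f=of_bool])
  fix k assume "k \<in> {..<N}"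
  then have "0 < next_mistake lab \<omega> (disc_start lab \<omega> k)"
    using assms next_mistake_gt by (fastforce simp: rounds_terminate_def)
  then show "C (\<omega> (disc_start lab \<omega> k)) (\<omega> (next_mistake lab \<omega> (disc_start lab \<omega> k))) =
      C (\<omega>' (disc_start lab \<omega>' k)) (\<omega>' (next_mistake lab \<omega>' (disc_start lab \<omega>' k)))"
    by (simp add: agree disc_start_pos disc_start_cong[symmetric] next_mistake_cong[symmetric])
qed

end

definition hit_weight :: "('d \<Rightarrow> 'd \<Rightarrow> bool) \<Rightarrow> ('d \<Rightarrow> 'y) \<Rightarrow> nat \<Rightarrow> (nat \<Rightarrow> 'd) \<Rightarrow> ennreal" where
  "hit_weight C lab N \<omega> =
     ennreal (if rounds_terminate lab N \<omega> then (1/2) ^ round_hits C lab N \<omega> else 0)"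

definition first_round_weight ::
  "('d \<Rightarrow> 'd \<Rightarrow> bool) \<Rightarrow> ('d \<Rightarrow> 'y) \<Rightarrow> nat \<Rightarrow> (nat \<Rightarrow> 'd) \<Rightarrow> ennreal" where
  "first_round_weight C lab n \<omega> =
     ennreal (if has_mistake lab \<omega> 1 \<and> next_mistake lab \<omega> 1 = n
              then (if C (\<omega> 1) (\<omega> n) then 1/2 else 1) else 0)"

lemma hit_weight_0: "hit_weight C lab 0 \<omega> = 1"
  by (simp add: hit_weight_def rounds_terminate_def round_hits_def)

lemma suminf_first_round_weight_mult:
  "(\<Sum>n. first_round_weight C lab n \<omega> * h n) =
     first_round_weight C lab (next_mistake lab \<omega> 1) \<omega> * h (next_mistake lab \<omega> 1)"
proof -
  let ?T = "next_mistake lab \<omega> 1"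
  have "(\<lambda>n. first_round_weight C lab n \<omega> * h n) =
      (\<lambda>n. if n = ?T then first_round_weight C lab ?T \<omega> * h ?T else 0)"
    by (auto simp: first_round_weight_def)
  moreover have "(\<lambda>n. if n = ?T then first_round_weight C lab ?T \<omega> * h ?T else 0) sums
      (first_round_weight C lab ?T \<omega> * h ?T)"
    by (rule sums_single)
  ultimately show ?thesis
    by (metis sums_unique)
qed

lemma hit_weight_Suc:
  "hit_weight C lab (Suc N) \<omega> = (\<Sum>n. first_round_weight C lab n \<omega> * hit_weight C lab N (shift_seq n \<omega>))"
proof -
  let ?T = "next_mistake lab \<omega> 1"
  let ?\<omega>' = "shift_seq ?T \<omega>"
  have "hit_weight C lab (Suc N) \<omega> = first_round_weight C lab ?T \<omega> * hit_weight C lab N ?\<omega>'"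
  proof (cases "has_mistake lab \<omega> 1 \<and> rounds_terminate lab N ?\<omega>'")
    case True
    then have "round_hits C lab (Suc N) \<omega> = of_bool (C (\<omega> 1) (\<omega> ?T)) + round_hits C lab N ?\<omega>'"
      by (simp add: round_hits_Suc_shift_seq)
    with True show ?thesis
      by (simp add: hit_weight_def first_round_weight_def rounds_terminate_Suc_shift_seq
          power_add ennreal_mult'')
  next
    case False
    then show ?thesis
      by (auto simp: hit_weight_def first_round_weight_def rounds_terminate_Suc_shift_seq)
  qed
  then show ?thesis
    by (simp add: suminf_first_round_weight_mult)
qed

lemma hit_weight_cong:
  assumes "\<And>i. 0 < i \<Longrightarrow> \<omega> i = \<omega>' i"
  shows "hit_weight C lab N \<omega> = hit_weight C lab N \<omega>'"
  using rounds_terminate_cong[of \<omega> \<omega>', OF assms, of lab N]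
    round_hits_cong[of \<omega> \<omega>', OF assms, of lab N C]
  by (simp add: hit_weight_def)

lemma first_round_weight_eq:
  "first_round_weight C lab n \<omega> =
     ennreal (if 1 < n \<and> lab (\<omega> n) \<noteq> lab (\<omega> 1) \<and> (\<forall>t. 1 < t \<and> t < n \<longrightarrow> lab (\<omega> t) = lab (\<omega> 1))
              then (if C (\<omega> 1) (\<omega> n) then 1/2 else 1) else 0)"
  unfolding first_round_weight_def has_mistake_next_mistake_eq_iff ..

lemma first_round_weight_cong:
  assumes "\<And>i. i \<le> n \<Longrightarrow> \<omega> i = \<omega>' i"
  shows "first_round_weight C lab n \<omega> = first_round_weight C lab n \<omega>'"
proof (cases "1 < n")
  case True
  then have "\<omega> 1 = \<omega>' 1" "\<omega> n = \<omega>' n" "\<And>t. t < n \<Longrightarrow> \<omega> t = \<omega>' t"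
    using assms by auto
  then show ?thesis
    unfolding first_round_weight_eq by simp
qed (simp add: first_round_weight_eq)

text \<open>If the first two draws are related by C, they carry different labels, so the
  first round ends at draw 2 and its pair is related by C.\<close>
lemma suminf_first_round_weight_le:
  assumes "\<And>a b. C a b \<Longrightarrow> lab a \<noteq> lab b"
  shows "(\<Sum>n. first_round_weight C lab n \<omega>) + ennreal (1/2) * of_bool (C (\<omega> 1) (\<omega> 2)) \<le> 1"
proof (cases "C (\<omega> 1) (\<omega> 2)")
  case True
  then have "has_mistake lab \<omega> 1 \<and> next_mistake lab \<omega> 1 = 2"
    unfolding has_mistake_next_mistake_eq_iff using assms by (auto simp: eq_commute)
  with True have "(\<Sum>n. first_round_weight C lab n \<omega>) = ennreal (1/2)"
    using suminf_first_round_weight_mult[of C lab \<omega> "\<lambda>_. 1"]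
    by (simp add: first_round_weight_def)
  moreover have "ennreal (1/2) + ennreal (1/2) = 1"
    using ennreal_plus[of "1/2" "1/2"] by simp
  ultimately show ?thesis
    using True by simp
next
  case False
  then show ?thesis
    using suminf_first_round_weight_mult[of C lab \<omega> "\<lambda>_. 1"]
    by (simp add: first_round_weight_def)
qed

context
  fixes M :: "'d measure" and lab :: "'d \<Rightarrow> 'y::countable" and C :: "'d \<Rightarrow> 'd \<Rightarrow> bool"
  assumes M: "prob_space M"
    and lab[measurable]: "lab \<in> M \<rightarrow>\<^sub>M count_space UNIV"
    and C[measurable]: "Measurable.pred (M \<Otimes>\<^sub>M M) (\<lambda>(a, b). C a b)"
begin

lemma measurable_first_round_weight[measurable]:
  "first_round_weight C lab n \<in> borel_measurable (PiM UNIV (\<lambda>_::nat. M))"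
  unfolding first_round_weight_eq[abs_def] by measurable

lemma measurable_hit_weight[measurable]:
  "hit_weight C lab N \<in> borel_measurable (PiM UNIV (\<lambda>_::nat. M))"
proof (induction N)
  case (Suc N)
  note [measurable] = Suc.IH
  show ?case
    unfolding hit_weight_Suc[abs_def] by measurable
qed (simp add: hit_weight_0)

lemma nn_integral_hit_weight_Suc:
  "(\<integral>\<^sup>+ \<omega>. hit_weight C lab (Suc N) \<omega> \<partial>PiM UNIV (\<lambda>_::nat. M)) =
     (\<integral>\<^sup>+ \<omega>. (\<Sum>n. first_round_weight C lab n \<omega>) \<partial>PiM UNIV (\<lambda>_::nat. M)) *
     (\<integral>\<^sup>+ \<omega>. hit_weight C lab N \<omega> \<partial>PiM UNIV (\<lambda>_::nat. M))"
  (is "?L = _")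
proof -
  let ?S = "PiM UNIV (\<lambda>_::nat. M)"
  have "?L = (\<Sum>n. \<integral>\<^sup>+ \<omega>. first_round_weight C lab n \<omega> * hit_weight C lab N (shift_seq n \<omega>) \<partial>?S)"
    unfolding hit_weight_Suc by (rule nn_integral_suminf) measurable
  also have "\<dots> = (\<Sum>n. (\<integral>\<^sup>+ \<omega>. first_round_weight C lab n \<omega> \<partial>?S) * (\<integral>\<^sup>+ \<omega>. hit_weight C lab N \<omega> \<partial>?S))"
    by (intro suminf_cong nn_integral_PiM_mult_shift_seq[OF M measurable_first_round_weight
        measurable_hit_weight first_round_weight_cong hit_weight_cong])
  also have "\<dots> = (\<integral>\<^sup>+ \<omega>. (\<Sum>n. first_round_weight C lab n \<omega>) \<partial>?S) * (\<integral>\<^sup>+ \<omega>. hit_weight C lab N \<omega> \<partial>?S)"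
    by (simp add: ennreal_suminf_multc nn_integral_suminf)
  finally show ?thesis .
qed

context
  fixes \<beta> :: real
  assumes C_label: "\<And>a b. C a b \<Longrightarrow> lab a \<noteq> lab b"
    and \<beta>: "0 \<le> \<beta>" "2 * \<beta> \<le> measure (PiM UNIV (\<lambda>_::nat. M)) {\<omega> \<in> space (PiM UNIV (\<lambda>_::nat. M)). C (\<omega> 1) (\<omega> 2)}"
begin

lemma nn_integral_first_round_weight_le:
  "(\<integral>\<^sup>+ \<omega>. (\<Sum>n. first_round_weight C lab n \<omega>) \<partial>PiM UNIV (\<lambda>_::nat. M)) \<le> ennreal (1 - \<beta>)"
proof -
  let ?S = "PiM UNIV (\<lambda>_::nat. M)"
  interpret S: prob_space ?S by (rule prob_space_PiM) (rule M)
  define W where "W = {\<omega> \<in> space ?S. C (\<omega> 1) (\<omega> 2)}"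
  have [measurable]: "W \<in> sets ?S"
    unfolding W_def by measurable
  have pointwise: "(\<Sum>n. first_round_weight C lab n \<omega>) + ennreal (1/2) * indicator W \<omega> \<le> 1" for \<omega>
  proof -
    have "(\<Sum>n. first_round_weight C lab n \<omega>) + ennreal (1/2) * indicator W \<omega>
        \<le> (\<Sum>n. first_round_weight C lab n \<omega>) + ennreal (1/2) * of_bool (C (\<omega> 1) (\<omega> 2))"
      by (intro add_left_mono mult_left_mono) (auto simp: W_def indicator_def)
    also have "\<dots> \<le> 1"
      by (rule suminf_first_round_weight_le[OF C_label])
    finally show ?thesis .
  qed
  have "ennreal \<beta> = ennreal (1/2) * ennreal (2 * \<beta>)"
    using \<beta>(1) by (subst ennreal_mult[symmetric]) auto
  also have "\<dots> \<le> ennreal (1/2) * emeasure ?S W"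
    using \<beta>(2) by (intro mult_left_mono) (simp_all add: W_def S.emeasure_eq_measure)
  finally have "(\<integral>\<^sup>+ \<omega>. (\<Sum>n. first_round_weight C lab n \<omega>) \<partial>?S) + ennreal \<beta>
      \<le> (\<integral>\<^sup>+ \<omega>. (\<Sum>n. first_round_weight C lab n \<omega>) \<partial>?S) + ennreal (1/2) * emeasure ?S W"
    by (rule add_left_mono)
  also have "\<dots> = (\<integral>\<^sup>+ \<omega>. (\<Sum>n. first_round_weight C lab n \<omega>) + ennreal (1/2) * indicator W \<omega> \<partial>?S)"
    by (simp add: nn_integral_add nn_integral_cmult_indicator)
  also have "\<dots> \<le> (\<integral>\<^sup>+ \<omega>. 1 \<partial>?S)"
    by (intro nn_integral_mono pointwise)
  also have "\<dots> = 1"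
    by (simp add: S.emeasure_space_1)
  finally have "(\<integral>\<^sup>+ \<omega>. (\<Sum>n. first_round_weight C lab n \<omega>) \<partial>?S) \<le> 1 - ennreal \<beta>"
    by (simp add: ennreal_le_minus_iff)
  also have "1 - ennreal \<beta> = ennreal (1 - \<beta>)"
    using ennreal_minus[OF \<beta>(1), of 1] by simp
  finally show ?thesis .
qed

lemma nn_integral_hit_weight_le:
  "(\<integral>\<^sup>+ \<omega>. hit_weight C lab N \<omega> \<partial>PiM UNIV (\<lambda>_::nat. M)) \<le> ennreal ((1 - \<beta>) ^ N)"
proof -
  interpret S: prob_space "PiM UNIV (\<lambda>_::nat. M)"
    by (rule prob_space_PiM) (rule M)
  have "0 \<le> 1 - \<beta>"
    using order.trans[OF \<beta>(2) S.prob_le_1] by simp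
  show ?thesis
  proof (induction N)
    case 0
    then show ?case
      by (simp add: hit_weight_0 S.emeasure_space_1)
  next
    case (Suc N)
    with \<open>0 \<le> 1 - \<beta>\<close> show ?case
      unfolding nn_integral_hit_weight_Suc
      using mult_mono[OF nn_integral_first_round_weight_le Suc.IH]
      by (simp add: ennreal_mult'')
  qed
qed

end

end

lemma ln2_le_five_sixths: "ln (2::real) \<le> 5/6"
proof -
  have "(2::real) \<le> 1 + 5/6 + (5/6)^2/2"
    by (simp add: power2_eq_square)
  also have "\<dots> \<le> exp (5/6)"
    by (rule exp_lower_Taylor_quadratic) simp
  finally have "ln (2::real) \<le> ln (exp (5/6))"
    by (subst ln_le_cancel_iff) auto
  then show ?thesis
    by simp
qed

text \<open>2 powr (\<beta> N) (1 - \<beta>)^N \<le> exp (- \<beta> N (1 - ln 2)), and 6 (1 - ln 2) \<ge> 1.\<close>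
lemma two_powr_mult_one_minus_power_le:
  fixes \<beta> \<delta> :: real
  assumes "0 < \<beta>" "\<beta> \<le> 1" "0 < \<delta>"
    and N: "6 * ln (1 / (2 * \<delta> * \<beta>)) / \<beta> \<le> real N"
  shows "2 powr (\<beta> * real N) * (1 - \<beta>) ^ N \<le> 2 * \<delta> * \<beta>"
proof -
  define L where "L = ln (1 / (2 * \<delta> * \<beta>))"
  have "L \<le> \<beta> * real N * (1 - ln 2)"
  proof (cases "L \<le> 0")
    case True
    have "0 \<le> \<beta> * real N * (1 - ln 2)"
      using assms ln_2_less_1 by simp
    with True show ?thesis
      by linarith
  next
    case False
    have "L \<le> 6 * L * (1 - ln 2)"
      using False ln2_le_five_sixths by (simp add: algebra_simps)
    also have "\<dots> \<le> \<beta> * real N * (1 - ln 2)"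
      using N assms ln_2_less_1 unfolding L_def by (intro mult_right_mono) (simp_all add: field_simps)
    finally show ?thesis .
  qed
  have "(1 - \<beta>) ^ N \<le> exp (- \<beta>) ^ N"
    using assms exp_ge_add_one_self[of "- \<beta>"] by (intro power_mono) simp_all
  then have "2 powr (\<beta> * real N) * (1 - \<beta>) ^ N \<le> exp (\<beta> * real N * ln 2) * exp (- \<beta> * real N)"
    by (simp add: powr_def exp_of_nat_mult[symmetric] mult.commute)
  also have "\<dots> = exp (- (\<beta> * real N * (1 - ln 2)))"
    by (simp add: exp_add[symmetric] algebra_simps)
  also have "\<dots> \<le> exp (- L)"
    using \<open>L \<le> \<beta> * real N * (1 - ln 2)\<close> by simp
  also have "\<dots> = 2 * \<delta> * \<beta>"
    using assms by (simp add: L_def ln_div)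
  finally show ?thesis .
qed

lemma measure_PiM_coordinates:
  fixes M :: "'a measure"
  assumes "prob_space M" "A \<in> sets M" "B \<in> sets M" "i \<noteq> j"
  shows "measure (PiM UNIV (\<lambda>_::'i. M)) {\<omega> \<in> space (PiM UNIV (\<lambda>_::'i. M)). \<omega> i \<in> A \<and> \<omega> j \<in> B}
     = measure M A * measure M B"
proof -
  define F where "F k = (if k = i then A else B)" for k
  have "{\<omega> \<in> space (PiM UNIV (\<lambda>_::'i. M)). \<omega> i \<in> A \<and> \<omega> j \<in> B} =
      prod_emb UNIV (\<lambda>_. M) {i, j} (Pi\<^sub>E {i, j} F)"
    using assms(4) by (auto simp: prod_emb_def F_def space_PiM PiE_iff)
  moreover have "emeasure (PiM UNIV (\<lambda>_::'i. M)) (prod_emb UNIV (\<lambda>_. M) {i, j} (Pi\<^sub>E {i, j} F))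
      = emeasure M A * emeasure M B"
    using assms by (subst emeasure_PiM_emb) (auto simp: F_def)
  ultimately show ?thesis
    by (simp add: measure_def enn2real_mult)
qed

lemma sum_ordered_pairs_eq_double_sum_unordered:
  fixes f :: "'a \<Rightarrow> 'b::comm_semiring_1"
  assumes "finite S" "\<And>i j. (i, j) \<in> S \<Longrightarrow> (j, i) \<in> S" "\<And>i. (i, i) \<notin> S"
  shows "(\<Sum>(i, j)\<in>S. f i * f j) = 2 * (\<Sum>q\<in>(\<lambda>(i, j). {i, j}) ` S. \<Prod>c\<in>q. f c)"
proof -
  let ?h = "\<lambda>(i, j). {i, j}"
  have "(\<Sum>(i, j)\<in>S. f i * f j) = (\<Sum>q\<in>?h ` S. \<Sum>p\<in>{p \<in> S. ?h p = q}. case p of (i, j) \<Rightarrow> f i * f j)"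
    by (rule sum.image_gen[OF assms(1)])
  also have "\<dots> = (\<Sum>q\<in>?h ` S. 2 * (\<Prod>c\<in>q. f c))"
  proof (rule sum.cong[OF refl])
    fix q assume "q \<in> ?h ` S"
    then obtain i j where ij: "(i, j) \<in> S" "q = {i, j}" by auto
    then have "i \<noteq> j" using assms(3) by auto
    have "{p \<in> S. ?h p = q} = {(i, j), (j, i)}"
      using ij assms(2) by (auto simp: doubleton_eq_iff)
    then show "(\<Sum>p\<in>{p \<in> S. ?h p = q}. case p of (i, j) \<Rightarrow> f i * f j) = 2 * (\<Prod>c\<in>q. f c)"
      using \<open>i \<noteq> j\<close> ij(2) by (simp add: mult.commute mult_2)
  qed
  finally show ?thesis
    by (simp add: sum_distrib_left)
qed

lemma sum_Fcount_eq:
  "(\<Sum>\<phi>\<in>{\<phi>. Fcount xof lab fb pos neg \<omega> N \<phi> \<noteq> 0}. Fcount xof lab fb pos neg \<omega> N \<phi>) = N"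
proof -
  let ?f = "iter_feature xof lab fb pos neg \<omega>"
  have "{\<phi>. Fcount xof lab fb pos neg \<omega> N \<phi> \<noteq> 0} = ?f ` {..<N}"
    by (auto simp: Fcount_def)
  moreover have "N = (\<Sum>\<phi>\<in>?f ` {..<N}. card {k \<in> {..<N}. ?f k = \<phi>})"
    using sum.image_gen[of "{..<N}" "\<lambda>_. 1::nat" ?f] by simp
  ultimately show ?thesis
    by (simp add: Fcount_def)
qed

lemma Phi_hat_eq:
  "Phi_hat Phi xof lab fb pos neg b \<beta> \<omega> =
     {\<phi> \<in> Phi. \<beta> * real (num_iters b) \<le> real (Fcount xof lab fb pos neg \<omega> (num_iters b) \<phi>)}"
  unfolding Phi_hat_def Let_def sum_Fcount_eq ..

lemma posf_neg:
  assumes "feature_system Phi feat neg pos" "\<psi> \<in> Phi"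
  shows "posf pos neg (neg \<psi>) = posf pos neg \<psi>"
  using assms unfolding feature_system_def posf_def by metis

locale dff_setting =
  fixes D :: "'d measure"
    and xof :: "'d \<Rightarrow> 'x" and exc :: "'d \<Rightarrow> bool" and lab :: "'d \<Rightarrow> 'y::countable"
    and fb :: "'d \<Rightarrow> 'y \<Rightarrow> 'x \<Rightarrow> 'f"
    and Phi :: "'f set" and feat :: "'f \<Rightarrow> 'x \<Rightarrow> bool" and neg :: "'f \<Rightarrow> 'f" and pos :: "'f \<Rightarrow> bool"
    and comps :: "'c set" and m :: nat and compset :: "'c \<Rightarrow> 'x set" and lbl :: "'c \<Rightarrow> 'y"
    and gof :: "'x \<Rightarrow> 'c" and disc :: "'c \<Rightarrow> 'c \<Rightarrow> 'f"
  assumes D: "prob_space D"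
    and features: "feature_system Phi feat neg pos"
    and rep: "representation Phi feat neg comps m compset lbl gof disc"
    and feedback: "consistent_feedback D xof exc lab fb lbl gof disc"
    and lab_measurable[measurable]: "lab \<in> D \<rightarrow>\<^sub>M count_space UNIV"
    and component_sets: "\<And>c. c \<in> comps \<Longrightarrow> {d \<in> space D. gof (xof d) = c \<and> \<not> exc d} \<in> sets D"
begin

abbreviation S :: "(nat \<Rightarrow> 'd) measure" where
  "S \<equiv> PiM UNIV (\<lambda>_. D)"

sublocale S: prob_space S
  by (rule prob_space_PiM) (rule D)

definition comp_event :: "'c \<Rightarrow> 'd set" where
  "comp_event c = {d \<in> space D. gof (xof d) = c \<and> \<not> exc d}"

definition feature_pairs :: "'f \<Rightarrow> ('c \<times> 'c) set" where
  "feature_pairs \<phi> =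
     {(i, j). i \<in> comps \<and> j \<in> comps \<and> lbl i \<noteq> lbl j \<and> posf pos neg (disc i j) = \<phi>}"

text \<open>Base example a and mistake b from components j and i: the feedback is then disc i j.\<close>
definition reveals :: "'f \<Rightarrow> 'd \<Rightarrow> 'd \<Rightarrow> bool" where
  "reveals \<phi> a b \<longleftrightarrow> (\<exists>(i, j)\<in>feature_pairs \<phi>. b \<in> comp_event i \<and> a \<in> comp_event j)"

lemma PG_eq_measure_comp_event: "PG D xof exc gof c = measure D (comp_event c)"
  by (simp add: PG_def comp_event_def)

lemma sets_comp_event[measurable]: "c \<in> comps \<Longrightarrow> comp_event c \<in> sets D"
  unfolding comp_event_def by (rule component_sets)

lemma comp_event_disjoint: "d \<in> comp_event c \<Longrightarrow> d \<in> comp_event c' \<Longrightarrow> c = c'"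
  by (simp add: comp_event_def)

lemma finite_feature_pairs: "finite (feature_pairs \<phi>)"
proof (rule finite_subset)
  show "feature_pairs \<phi> \<subseteq> comps \<times> comps"
    by (auto simp: feature_pairs_def)
  show "finite (comps \<times> comps)"
    using rep by (simp add: representation_def)
qed

lemma feature_pairs_swap: "(i, j) \<in> feature_pairs \<phi> \<Longrightarrow> (j, i) \<in> feature_pairs \<phi>"
  using rep posf_neg[OF features]
  by (auto simp: feature_pairs_def representation_def)

lemma measurable_reveals[measurable]: "Measurable.pred (D \<Otimes>\<^sub>M D) (\<lambda>(a, b). reveals \<phi> a b)"
proof -
  have "Measurable.pred (D \<Otimes>\<^sub>M D) (\<lambda>x. snd x \<in> comp_event (fst p) \<and> fst x \<in> comp_event (snd p))"
    if "p \<in> feature_pairs \<phi>" for p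
    using that by (auto simp: feature_pairs_def)
  then have "Measurable.pred (D \<Otimes>\<^sub>M D)
      (\<lambda>x. \<exists>p\<in>feature_pairs \<phi>. snd x \<in> comp_event (fst p) \<and> fst x \<in> comp_event (snd p))"
    by (rule pred_intros_finite(4)[OF finite_feature_pairs])
  then show ?thesis
    by (simp add: reveals_def case_prod_beta')
qed

lemma reveals_feedback:
  assumes "reveals \<phi> a b"
  shows "lab a \<noteq> lab b" "posf pos neg (fb b (lab a) (xof a)) = \<phi>"
proof -
  obtain i j where ij: "(i, j) \<in> feature_pairs \<phi>" "b \<in> comp_event i" "a \<in> comp_event j"
    using assms unfolding reveals_def by blast
  then have "lab a = lbl j" "lab b = lbl i" "fb b (lab a) (xof a) = disc i j"
    using feedback by (auto simp: consistent_feedback_def comp_event_def feature_pairs_def)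
  with ij(1) show "lab a \<noteq> lab b" "posf pos neg (fb b (lab a) (xof a)) = \<phi>"
    by (auto simp: feature_pairs_def)
qed

lemma reveals_unique: "reveals \<phi> a b \<Longrightarrow> reveals \<psi> a b \<Longrightarrow> \<phi> = \<psi>"
  using reveals_feedback(2) by metis

lemma round_hits_reveals_le_Fcount:
  "round_hits (reveals \<phi>) lab N \<omega> \<le> Fcount xof lab fb pos neg \<omega> N \<phi>"
  unfolding round_hits_def Fcount_def
  by (auto simp: iter_feature_def Let_def intro!: card_mono dest: reveals_feedback(2))

lemma prob_reveals:
  "measure S {\<omega> \<in> space S. reveals \<phi> (\<omega> 1) (\<omega> 2)} = 2 * beta_of D xof exc comps lbl gof disc pos neg \<phi>"
proof -
  let ?A = "\<lambda>(i, j). {\<omega> \<in> space S. \<omega> 1 \<in> comp_event j \<and> \<omega> 2 \<in> comp_event i}"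
  have "{\<omega> \<in> space S. reveals \<phi> (\<omega> 1) (\<omega> 2)} = (\<Union>p\<in>feature_pairs \<phi>. ?A p)"
    by (auto simp: reveals_def)
  moreover have "disjoint_family_on ?A (feature_pairs \<phi>)"
    by (auto simp: disjoint_family_on_def dest: comp_event_disjoint)
  moreover have "?A p \<in> sets S" if "p \<in> feature_pairs \<phi>" for p
    using that by (auto simp: feature_pairs_def)
  ultimately have "measure S {\<omega> \<in> space S. reveals \<phi> (\<omega> 1) (\<omega> 2)} =
      (\<Sum>p\<in>feature_pairs \<phi>. measure S (?A p))"
    by (simp add: S.finite_measure_finite_Union finite_feature_pairs image_subset_iff)
  also have "\<dots> = (\<Sum>(i, j)\<in>feature_pairs \<phi>. PG D xof exc gof i * PG D xof exc gof j)"
    by (intro sum.cong refl)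
      (auto simp: measure_PiM_coordinates[OF D] PG_eq_measure_comp_event feature_pairs_def)
  also have "\<dots> = 2 * (\<Sum>q\<in>(\<lambda>(i, j). {i, j}) ` feature_pairs \<phi>. \<Prod>c\<in>q. PG D xof exc gof c)"
    by (rule sum_ordered_pairs_eq_double_sum_unordered)
      (auto simp: finite_feature_pairs feature_pairs_swap, auto simp: feature_pairs_def)
  also have "(\<lambda>(i, j). {i, j}) ` feature_pairs \<phi> = pairs_of comps lbl disc pos neg \<phi>"
    by (auto simp: pairs_of_def feature_pairs_def)
  finally show ?thesis
    by (simp add: beta_of_def)
qed

lemma measurable_hit_weight_reveals[measurable]:
  "hit_weight (reveals \<phi>) lab N \<in> borel_measurable S"
  by (rule measurable_hit_weight[OF D lab_measurable measurable_reveals])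

lemma
  assumes "0 < \<beta>"
  shows finite_Phi_beta: "finite (Phi_beta Phi D xof exc comps lbl gof disc pos neg \<beta>)"
    and card_Phi_beta_le: "real (card (Phi_beta Phi D xof exc comps lbl gof disc pos neg \<beta>)) * (2 * \<beta>) \<le> 1"
proof -
  let ?PB = "Phi_beta Phi D xof exc comps lbl gof disc pos neg \<beta>"
  let ?W = "\<lambda>\<phi>. {\<omega> \<in> space S. reveals \<phi> (\<omega> 1) (\<omega> 2)}"
  have card_le: "real (card F) * (2 * \<beta>) \<le> 1" if F: "finite F" "F \<subseteq> ?PB" for F
  proof -
    have "2 * \<beta> \<le> measure S (?W \<phi>)" if "\<phi> \<in> F" for \<phi>
      using F(2) that prob_reveals[of \<phi>] by (auto simp: Phi_beta_def)
    then have "real (card F) * (2 * \<beta>) \<le> (\<Sum>\<phi>\<in>F. measure S (?W \<phi>))"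
      using sum_mono[of F "\<lambda>_. 2 * \<beta>"] by simp
    also have "\<dots> = measure S (\<Union>\<phi>\<in>F. ?W \<phi>)"
      by (rule S.finite_measure_finite_Union[symmetric, OF F(1)])
        (auto simp: disjoint_family_on_def dest: reveals_unique)
    also have "\<dots> \<le> 1"
      by (rule S.prob_le_1)
    finally show ?thesis .
  qed
  show "finite ?PB"
  proof (rule ccontr)
    assume "infinite ?PB"
    then obtain F where F: "finite F" "card F = nat \<lceil>1 / (2 * \<beta>)\<rceil> + 1" "F \<subseteq> ?PB"
      using infinite_arbitrarily_large by blast
    then have "1 / (2 * \<beta>) < real (card F)"
      by linarith
    then have "1 < real (card F) * (2 * \<beta>)"
      using assms by (simp add: field_simps)
    with card_le[OF F(1,3)] show False
      by simp
  qed
  then show "real (card ?PB) * (2 * \<beta>) \<le> 1"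
    by (rule card_le) simp
qed

lemma prob_hit_weight_ge_le:
  assumes "\<phi> \<in> Phi_beta Phi D xof exc comps lbl gof disc pos neg \<beta>" "0 \<le> \<beta>" "0 \<le> c"
  shows "measure S {\<omega> \<in> space S. 1 \<le> ennreal c * hit_weight (reveals \<phi>) lab N \<omega>} \<le> c * (1 - \<beta>) ^ N"
proof -
  have \<beta>: "2 * \<beta> \<le> measure S {\<omega> \<in> space S. reveals \<phi> (\<omega> 1) (\<omega> 2)}"
    using assms(1) prob_reveals[of \<phi>] by (simp add: Phi_beta_def)
  then have "0 \<le> 1 - \<beta>"
    using S.prob_le_1[of "{\<omega> \<in> space S. reveals \<phi> (\<omega> 1) (\<omega> 2)}"] by linarith
  have "emeasure S {\<omega> \<in> space S. 1 \<le> ennreal c * hit_weight (reveals \<phi>) lab N \<omega>}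
      \<le> ennreal c * (\<integral>\<^sup>+ \<omega>. hit_weight (reveals \<phi>) lab N \<omega> * indicator (space S) \<omega> \<partial>S)"
    by (rule nn_integral_Markov_inequality) measurable
  also have "(\<integral>\<^sup>+ \<omega>. hit_weight (reveals \<phi>) lab N \<omega> * indicator (space S) \<omega> \<partial>S) =
      (\<integral>\<^sup>+ \<omega>. hit_weight (reveals \<phi>) lab N \<omega> \<partial>S)"
    by (rule nn_integral_cong) simp
  also have "\<dots> \<le> ennreal ((1 - \<beta>) ^ N)"
    using \<beta> by (intro nn_integral_hit_weight_le[OF D lab_measurable measurable_reveals _ assms(2)])
      (auto dest: reveals_feedback(1))
  finally have "emeasure S {\<omega> \<in> space S. 1 \<le> ennreal c * hit_weight (reveals \<phi>) lab N \<omega>}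
      \<le> ennreal (c * (1 - \<beta>) ^ N)"
    using assms(3) \<open>0 \<le> 1 - \<beta>\<close> by (simp add: mult_left_mono ennreal_mult)
  then show ?thesis
    using assms(3) \<open>0 \<le> 1 - \<beta>\<close> by (simp add: S.emeasure_eq_measure)
qed

lemma not_in_Phi_hat_imp_hit_weight_ge:
  assumes "disc_terminates lab b \<omega>" "\<phi> \<in> Phi" "\<phi> \<notin> Phi_hat Phi xof lab fb pos neg b \<beta> \<omega>"
  shows "1 \<le> ennreal (2 powr (\<beta> * real (num_iters b))) * hit_weight (reveals \<phi>) lab (num_iters b) \<omega>"
proof -
  let ?N = "num_iters b"
  let ?h = "round_hits (reveals \<phi>) lab ?N \<omega>"
  have "real ?h < \<beta> * real ?N"
    using assms(2,3) round_hits_reveals_le_Fcount[of \<phi> ?N \<omega>] by (auto simp: Phi_hat_eq)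
  then have "2 ^ ?h \<le> 2 powr (\<beta> * real ?N)"
    by (simp add: powr_realpow[symmetric] powr_mono)
  then have "1 \<le> 2 powr (\<beta> * real ?N) * (1/2) ^ ?h"
    by (simp add: field_simps power_divide)
  moreover have "hit_weight (reveals \<phi>) lab ?N \<omega> = ennreal ((1/2) ^ ?h)"
    using assms(1) by (simp add: hit_weight_def disc_terminates_iff_rounds_terminate)
  ultimately show ?thesis
    by (simp flip: ennreal_mult)
qed

lemma prob_missed_feature_le:
  assumes "0 < \<beta>"
  shows "\<exists>A \<in> sets S.
    {\<omega> \<in> space S. disc_terminates lab b \<omega> \<and>
       \<not> Phi_beta Phi D xof exc comps lbl gof disc pos neg \<beta> \<subseteq> Phi_hat Phi xof lab fb pos neg b \<beta> \<omega>} \<subseteq> A \<and>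
    measure S A \<le> real (card (Phi_beta Phi D xof exc comps lbl gof disc pos neg \<beta>)) *
      (2 powr (\<beta> * real (num_iters b)) * (1 - \<beta>) ^ num_iters b)"
proof -
  define N where "N = num_iters b"
  define PB where "PB = Phi_beta Phi D xof exc comps lbl gof disc pos neg \<beta>"
  define c where "c = 2 powr (\<beta> * real N)"
  define A where "A \<phi> = {\<omega> \<in> space S. 1 \<le> ennreal c * hit_weight (reveals \<phi>) lab N \<omega>}" for \<phi>
  have "finite PB"
    using finite_Phi_beta[OF assms] by (simp add: PB_def)
  have "measure S (\<Union>\<phi>\<in>PB. A \<phi>) \<le> (\<Sum>\<phi>\<in>PB. measure S (A \<phi>))"
    by (rule S.finite_measure_subadditive_finite[OF \<open>finite PB\<close>]) (auto simp: A_def)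
  also have "\<dots> \<le> real (card PB) * (c * (1 - \<beta>) ^ N)"
    using sum_mono[of PB "\<lambda>\<phi>. measure S (A \<phi>)" "\<lambda>_. c * (1 - \<beta>) ^ N"] prob_hit_weight_ge_le assms
    by (simp add: A_def PB_def c_def)
  finally have "measure S (\<Union>\<phi>\<in>PB. A \<phi>) \<le> real (card PB) * (c * (1 - \<beta>) ^ N)" .
  moreover have "(\<Union>\<phi>\<in>PB. A \<phi>) \<in> sets S"
    using \<open>finite PB\<close> by (auto simp: A_def)
  moreover have "{\<omega> \<in> space S. disc_terminates lab b \<omega> \<and> \<not> PB \<subseteq> Phi_hat Phi xof lab fb pos neg b \<beta> \<omega>}
      \<subseteq> (\<Union>\<phi>\<in>PB. A \<phi>)"
    using not_in_Phi_hat_imp_hit_weight_ge by (force simp: A_def PB_def Phi_beta_def c_def N_def)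
  ultimately show ?thesis
    unfolding PB_def c_def N_def by blast
qed

end

theorem lemma7:
  fixes D :: "'d measure"
    and xof :: "'d \<Rightarrow> 'x" and exc :: "'d \<Rightarrow> bool" and lab :: "'d \<Rightarrow> 'y::finite"
    and fb :: "'d \<Rightarrow> 'y \<Rightarrow> 'x \<Rightarrow> 'f"
    and Phi :: "'f set" and feat :: "'f \<Rightarrow> 'x \<Rightarrow> bool" and neg :: "'f \<Rightarrow> 'f" and pos :: "'f \<Rightarrow> bool"
    and comps :: "'c set" and m :: nat and compset :: "'c \<Rightarrow> 'x set" and lbl :: "'c \<Rightarrow> 'y"
    and gof :: "'x \<Rightarrow> 'c" and disc :: "'c \<Rightarrow> 'c \<Rightarrow> 'f"
    and b :: nat and \<beta> \<delta> :: real
  assumes "prob_space D"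
    and "feature_system Phi feat neg pos"
    and "representation Phi feat neg comps m compset lbl gof disc"
    and "consistent_feedback D xof exc lab fb lbl gof disc"
    and "{d \<in> space D. exc d} \<in> sets D"
    and "lab \<in> D \<rightarrow>\<^sub>M count_space UNIV"
    and "\<And>c. c \<in> comps \<Longrightarrow> {d \<in> space D. gof (xof d) = c \<and> \<not> exc d} \<in> sets D"
    and "0 < \<beta>" and "\<beta> < 1" and "0 < \<delta>" and "\<delta> < 1"
    and "real (num_iters b) \<ge> 6 * ln (1 / (2 * \<delta> * \<beta>)) / \<beta>"
  shows "\<exists>A \<in> sets (PiM UNIV (\<lambda>_::nat. D)).
           {\<omega> \<in> space (PiM UNIV (\<lambda>_::nat. D)).
              disc_terminates lab b \<omega> \<and>
              \<not> Phi_beta Phi D xof exc comps lbl gof disc pos neg \<beta>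
                  \<subseteq> Phi_hat Phi xof lab fb pos neg b \<beta> \<omega>} \<subseteq> A
           \<and> measure (PiM UNIV (\<lambda>_::nat. D)) A \<le> \<delta>"
proof -
  interpret dff_setting D xof exc lab fb Phi feat neg pos comps m compset lbl gof disc
    using assms(1-4,6,7) by (simp add: dff_setting_def)
  let ?PB = "Phi_beta Phi D xof exc comps lbl gof disc pos neg \<beta>"
  obtain A where A: "A \<in> sets S"
    "{\<omega> \<in> space S. disc_terminates lab b \<omega> \<and> \<not> ?PB \<subseteq> Phi_hat Phi xof lab fb pos neg b \<beta> \<omega>} \<subseteq> A"
    "measure S A \<le> real (card ?PB) * (2 powr (\<beta> * real (num_iters b)) * (1 - \<beta>) ^ num_iters b)"
    using prob_missed_feature_le[OF assms(8)] by blast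
  note A(3)
  also have "real (card ?PB) * (2 powr (\<beta> * real (num_iters b)) * (1 - \<beta>) ^ num_iters b)
      \<le> real (card ?PB) * (2 * \<delta> * \<beta>)"
    using two_powr_mult_one_minus_power_le assms(8-10,12) by (intro mult_left_mono) simp_all
  also have "\<dots> \<le> \<delta>"
    using mult_left_mono[OF card_Phi_beta_le[OF assms(8)], of \<delta>] assms(10)
    by (simp add: algebra_simps)
  finally show ?thesis
    using A by blast
qed

end
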